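(* If Algorithm 1 is run for any integer $T\ge\frac{6w}{\alpha\epsilon}$ iterations and $\bar y=\frac1T\sum_{k=0}^{T-1}p(x_k)$, then $\mathbb{E}[\mathbf 1^T\bar y]\le(1+5\epsilon)\,\mathrm{OPT}$.
   Context: Standing setup: $A\in\mathbb{R}^{m\times n}_{\ge 0}$ has no zero column and is normalized so that $\min_{i\in[n]}\|A_{:i}\|_\infty=1$, where $A_{:i}$ denotes the $i$-th column. The packing LP is $\max\{\mathbf 1^Tx: x\ge 0,\ Ax\le \mathbf 1\}$ with optimal value $\mathrm{OPT}$. $\epsilon\in(0,1/2]$. $\log$ is natural unless written $\log_2$. $\mu=\frac{\epsilon}{4\log(nm/\epsilon)}$, $p_j(x)=\exp\big(\frac{1}{\mu}((Ax)_j-1)\big)$, $p(x)=(p_1(x),\dots,p_m(x))$, $f_\mu(x)=-\mathbf 1^Tx+\mu\sum_jp_j(x)$, $\nabla_i f_\mu(x)=-1+\sum_jA_{ji}p_j(x)$. Algorithm 1 with $T$ iterations: set $\alpha=\mu/20$, $w=\lceil\log_2(1/\epsilon)\rceil$, $x_0[i]=\frac{1-\epsilon/2}{n\|A_{:i}\|_\infty}$. For $k=0,\dots,T-1$: choose $t_k\in\{0,\dots,w-1\}$ uniformly at random, independently of the past; writing $g_i=\nabla_i f_\mu(x_k)$, define $\xi_k[i]=0$ if $|g_i|\le\epsilon$, $\xi_k[i]=g_i$ if $\epsilon<|g_i|\le 1$, $\xi_k[i]=1$ if $g_i>1$; $\xi^{(t)}_k[i]=\xi_k[i]$ if $\epsilon2^t<|\xi_k[i]|\le\epsilon2^{t+1}$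 and $0$ otherwise; $x_{k+1}[i]=x_k[i]\exp(-\alpha\,\xi^{(t_k)}_k[i])$. *)

theory Defs
  imports Complex_Main
begin

text \<open>Matrices are functions nat => nat => real; A j i is the entry in row j (< m),
column i (< n). Vectors are nat => real, only indices below the dimension matter.\<close>

definition matvec :: "(nat \<Rightarrow> nat \<Rightarrow> real) \<Rightarrow> nat \<Rightarrow> (nat \<Rightarrow> real) \<Rightarrow> nat \<Rightarrow> real" where
  "matvec A n x j = (\<Sum>i<n. A j i * x i)"

definition colnorm :: "(nat \<Rightarrow> nat \<Rightarrow> real) \<Rightarrow> nat \<Rightarrow> nat \<Rightarrow> real" where
  "colnorm A m i = Max ((\<lambda>j. \<bar>A j i\<bar>) ` {..<m})"

definition packing_OPT :: "(nat \<Rightarrow> nat \<Rightarrow> real) \<Rightarrow> nat \<Rightarrow> nat \<Rightarrow> real" where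
  "packing_OPT A m n = Sup {(\<Sum>i<n. x i) | x. (\<forall>i<n. 0 \<le> x i) \<and> (\<forall>j<m. matvec A n x j \<le> 1)}"

definition mu :: "nat \<Rightarrow> nat \<Rightarrow> real \<Rightarrow> real" where
  "mu n m \<epsilon> = \<epsilon> / (4 * ln (real n * real m / \<epsilon>))"

definition pvec :: "(nat \<Rightarrow> nat \<Rightarrow> real) \<Rightarrow> nat \<Rightarrow> nat \<Rightarrow> real \<Rightarrow> (nat \<Rightarrow> real) \<Rightarrow> nat \<Rightarrow> real" where
  "pvec A m n \<epsilon> x j = exp ((1 / mu n m \<epsilon>) * (matvec A n x j - 1))"

definition grad_f :: "(nat \<Rightarrow> nat \<Rightarrow> real) \<Rightarrow> nat \<Rightarrow> nat \<Rightarrow> real \<Rightarrow> (nat \<Rightarrow> real) \<Rightarrow> nat \<Rightarrow> real" where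
  "grad_f A m n \<epsilon> x i = -1 + (\<Sum>j<m. A j i * pvec A m n \<epsilon> x j)"

text \<open>Truncated gradient entry xi_k[i] (g is always >= -1).\<close>
definition xi_trunc :: "real \<Rightarrow> real \<Rightarrow> real" where
  "xi_trunc \<epsilon> g = (if \<bar>g\<bar> \<le> \<epsilon> then 0 else if g > 1 then 1 else g)"

definition xi_bucket :: "real \<Rightarrow> nat \<Rightarrow> real \<Rightarrow> real" where
  "xi_bucket \<epsilon> t v = (if \<epsilon> * 2 ^ t < \<bar>v\<bar> \<and> \<bar>v\<bar> \<le> \<epsilon> * 2 ^ (t + 1) then v else 0)"

definition alpha :: "nat \<Rightarrow> nat \<Rightarrow> real \<Rightarrow> real" where
  "alpha n m \<epsilon> = mu n m \<epsilon> / 20"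

definition wpar :: "real \<Rightarrow> nat" where
  "wpar \<epsilon> = nat \<lceil>log 2 (1 / \<epsilon>)\<rceil>"

definition x_init :: "(nat \<Rightarrow> nat \<Rightarrow> real) \<Rightarrow> nat \<Rightarrow> nat \<Rightarrow> real \<Rightarrow> nat \<Rightarrow> real" where
  "x_init A m n \<epsilon> i = (1 - \<epsilon> / 2) / (real n * colnorm A m i)"

definition alg_step :: "(nat \<Rightarrow> nat \<Rightarrow> real) \<Rightarrow> nat \<Rightarrow> nat \<Rightarrow> real \<Rightarrow> nat \<Rightarrow> (nat \<Rightarrow> real) \<Rightarrow> nat \<Rightarrow> real" where
  "alg_step A m n \<epsilon> t x i =
     x i * exp (- alpha n m \<epsilon> * xi_bucket \<epsilon> t (xi_trunc \<epsilon> (grad_f A m n \<epsilon> x i)))"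

text \<open>Iterate x_k, given the list ts of random choices t_0, t_1, ...\<close>
fun alg_iter :: "(nat \<Rightarrow> nat \<Rightarrow> real) \<Rightarrow> nat \<Rightarrow> nat \<Rightarrow> real \<Rightarrow> nat list \<Rightarrow> nat \<Rightarrow> nat \<Rightarrow> real" where
  "alg_iter A m n \<epsilon> ts 0 = x_init A m n \<epsilon>"
| "alg_iter A m n \<epsilon> ts (Suc k) = alg_step A m n \<epsilon> (ts ! k) (alg_iter A m n \<epsilon> ts k)"

definition ybar_total :: "(nat \<Rightarrow> nat \<Rightarrow> real) \<Rightarrow> nat \<Rightarrow> nat \<Rightarrow> real \<Rightarrow> nat \<Rightarrow> nat list \<Rightarrow> real" where
  "ybar_total A m n \<epsilon> T ts =
     (\<Sum>j<m. (1 / real T) * (\<Sum>k<T. pvec A m n \<epsilon> (alg_iter A m n \<epsilon> ts k) j))"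

text \<open>Expectation over t_0,...,t_{T-1} i.i.d. uniform on {0..w-1}: the uniform
average over all length-T sequences with entries < w.\<close>
definition expected_ybar_total :: "(nat \<Rightarrow> nat \<Rightarrow> real) \<Rightarrow> nat \<Rightarrow> nat \<Rightarrow> real \<Rightarrow> nat \<Rightarrow> real" where
  "expected_ybar_total A m n \<epsilon> T =
     (\<Sum>ts \<in> {ts. set ts \<subseteq> {..<wpar \<epsilon>} \<and> length ts = T}. ybar_total A m n \<epsilon> T ts)
       / real (wpar \<epsilon>) ^ T"

end

theory Submission
  imports Defs "HOL-Analysis.Convex"
begin

text \<open>
  Write \<open>v\<^sub>t\<close> for the part of the truncated gradient \<open>\<xi>\<close> lying in bucket \<open>t\<close>, so that
  \<open>\<xi> = \<Sum>\<^sub>t v\<^sub>t\<close>. A step in bucket \<open>t\<close> is a multiplicative update of size \<open>\<alpha> = \<mu>/20\<close>, which moves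
  each load \<open>(Ax)\<^sub>j\<close> by at most \<open>\<mu>\<close>; a second-order bound on the exponential barrier then shows
  that \<open>f\<^sub>\<mu>\<close> drops by \<open>(3/4) \<alpha> \<Sum> g v\<^sub>t x\<close>, while \<open>\<Sum> x\<close> drops by about \<open>\<alpha> \<Sum> v\<^sub>t x\<close>. Hence the
  potential \<open>\<Psi> = \<Sum>x/\<alpha> + 4(1+\<alpha>)/(3\<alpha>) f\<^sub>\<mu>\<close> drops by at least \<open>\<Sum> v\<^sub>t x + \<Sum> g v\<^sub>t x\<close>.

  On the other hand \<open>\<Sum>\<^sub>j p\<^sub>j = \<Sum>\<^sub>i x\<^sub>i (1 + g\<^sub>i) + \<Sum>\<^sub>j p\<^sub>j (1 - (Ax)\<^sub>j)\<close>; the first sum is at most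
  \<open>(1+\<epsilon>) \<Sum> x + \<Sum>\<^sub>t (\<Sum> v\<^sub>t x + \<Sum> g v\<^sub>t x)\<close> because \<open>g \<le> \<xi> + \<epsilon> + g \<xi>\<close>, and the second is at
  most \<open>\<epsilon>/2 \<Sum> p + \<epsilon>\<^sup>3/2\<close> because rows with slack are exponentially penalised. So \<open>\<Sum>\<^sub>j p\<^sub>j(x\<^sub>k)\<close>
  is \<open>(1 + O(\<epsilon>)) OPT\<close> plus \<open>w/(1-\<epsilon>/2)\<close> times the expected drop of \<open>\<Psi>\<close> at step \<open>k\<close>.

  Throughout, \<open>x > 0\<close>, \<open>f\<^sub>\<mu>(x) \<le> 0\<close> and \<open>Ax \<le> 1 + 0.9\<epsilon>\<close>: the last bound follows from
  \<open>\<mu> p\<^sub>j(x) \<le> \<Sum> x \<le> 1.5 n\<close> after taking logarithms. This keeps \<open>\<Psi>\<close> bounded below by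
  \<open>-O(OPT/\<alpha>)\<close>, so the expected drops telescope to at most \<open>O((1 + OPT)/\<alpha>)\<close>, which
  \<open>T \<ge> 6w/(\<alpha>\<epsilon>)\<close> turns into an \<open>\<epsilon>/6\<close> share.
\<close>

lemma ln_2_ge_half: "1/2 \<le> ln (2::real)"
  using ln_le_cancel_iff[of "exp (1/2)" 2] exp_half_le2 by simp

lemma exp_1_ge_64_27: "64/27 \<le> exp (1::real)"
proof -
  have "(4/3)^3 \<le> exp (1/3::real)^3"
    using exp_ge_add_one_self[of "1/3::real"] by (intro power_mono) auto
  also have "exp (1/3::real)^3 = exp 1"
    by (simp flip: exp_of_nat_mult)
  finally show ?thesis by (simp add: power3_eq_cube)
qed

lemma exp_le_quadratic:
  assumes "\<bar>z::real\<bar> \<le> 1" shows "exp z \<le> 1 + z + z^2"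
proof (cases "z \<ge> 0")
  case True
  thus ?thesis using assms exp_bound by auto
next
  case False
  have "exp z \<le> 1 / (1 - z)"
    using False exp_ge_add_one_self[of "-z"] by (simp add: exp_minus field_simps)
  also have "\<dots> \<le> 1 + z + z^2"
  proof -
    have "(1 - z) * (1 + z + z^2) = 1 - z^3"
      by (simp add: algebra_simps power2_eq_square power3_eq_cube)
    moreover have "z^3 \<le> 0" using False by (simp add: odd_power_less_zero less_imp_le)
    ultimately show ?thesis using False by (simp add: divide_le_eq mult.commute)
  qed
  finally show ?thesis .
qed

lemma abs_exp_neg_minus_one_le:
  fixes s a :: real
  assumes "\<bar>s\<bar> \<le> a" "a \<le> 1"
  shows "\<bar>exp (- s) - 1\<bar> \<le> (1 + a) * \<bar>s\<bar>"
proof -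
  have "s^2 \<le> a * \<bar>s\<bar>"
    using assms(1) mult_right_mono[of "\<bar>s\<bar>" a "\<bar>s\<bar>"] by (simp add: power2_eq_square)
  moreover have "exp (- s) \<le> 1 - s + s^2" using assms exp_le_quadratic[of "- s"] by simp
  moreover have "1 - s \<le> exp (- s)" using exp_ge_add_one_self[of "- s"] by simp
  moreover have "0 \<le> a * \<bar>s\<bar>" "- s \<le> \<bar>s\<bar>" "s \<le> \<bar>s\<bar>" using assms(1) by auto
  ultimately show ?thesis unfolding abs_le_iff distrib_right by linarith
qed

lemma mult_exp_neg_minus_one_le:
  fixes g s a :: real
  assumes "0 \<le> g * s" "\<bar>s\<bar> \<le> a" "a \<le> 1"
  shows "g * (exp (- s) - 1) \<le> - ((1 - a) * (g * s))"
proof (cases "s \<ge> 0")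
  case True
  show ?thesis
  proof (cases "g \<ge> 0")
    case True
    have "exp (- s) - 1 \<le> - s + a * s"
      using \<open>s \<ge> 0\<close> assms mult_right_mono[of s a s] exp_le_quadratic[of "- s"]
      by (simp add: power2_eq_square)
    hence "g * (exp (- s) - 1) \<le> g * (- s + a * s)" using True by (rule mult_left_mono)
    thus ?thesis by (simp add: algebra_simps)
  next
    case False
    hence "s = 0" using assms(1) \<open>s \<ge> 0\<close> by (simp add: zero_le_mult_iff)
    thus ?thesis by simp
  qed
next
  case False
  hence "g \<le> 0" using assms(1) by (simp add: zero_le_mult_iff)
  hence "g * (exp (- s) - 1) \<le> g * (- s)"
    using exp_ge_add_one_self[of "- s"] by (intro mult_left_mono_neg) auto
  moreover have "0 \<le> a * (g * s)" using assms by simp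
  ultimately show ?thesis by (simp add: algebra_simps)
qed

lemma mult_exp_neg_divide_antimono:
  fixes c s0 s :: real
  assumes "0 < c" "c \<le> s0" "s0 \<le> s"
  shows "s * exp (- s / c) \<le> s0 * exp (- s0 / c)"
proof -
  have "s = s0 * (1 + (s - s0) / s0)" using assms by (simp add: field_simps)
  also have "\<dots> \<le> s0 * (1 + (s - s0) / c)"
    using assms by (intro mult_left_mono add_left_mono divide_left_mono) auto
  also have "\<dots> \<le> s0 * exp ((s - s0) / c)"
    using assms exp_ge_add_one_self[of "(s - s0) / c"] by (intro mult_left_mono) auto
  finally have "s * exp (- s / c) \<le> s0 * exp ((s - s0) / c) * exp (- s / c)"
    by (intro mult_right_mono) auto
  also have "\<dots> = s0 * exp (- s0 / c)"
    by (simp add: mult.assoc flip: exp_add diff_divide_distrib)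
  finally show ?thesis .
qed

lemma ln_le_divide_exp_1:
  assumes "0 < (y::real)" shows "ln y \<le> y / exp 1"
  using ln_le_minus_one[of "y / exp 1"] assms by (simp add: ln_div)

lemma weighted_Cauchy_Schwarz:
  fixes w y :: "'a \<Rightarrow> real"
  assumes "\<And>i. i \<in> I \<Longrightarrow> 0 \<le> w i"
  shows "(\<Sum>i\<in>I. w i * y i)^2 \<le> (\<Sum>i\<in>I. w i) * (\<Sum>i\<in>I. w i * (y i)^2)"
  using Cauchy_Schwarz_ineq_sum[of "\<lambda>i. sqrt (w i)" "\<lambda>i. sqrt (w i) * y i" I] assms
  by (simp add: power_mult_distrib mult.assoc[symmetric] cong: sum.cong)

section \<open>Truncation and bucketing\<close>

lemma xi_trunc_props:
  fixes g e :: real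
  assumes "-1 \<le> g" "0 < e" "e \<le> 1/2"
  defines "v \<equiv> xi_trunc e g"
  shows "\<bar>v\<bar> \<le> 1" "0 \<le> g * v" "v = 0 \<or> e < \<bar>v\<bar>" "g \<le> v + e + g * v"
    "v^2 \<le> g * v" "v^2 * (1 + g) \<le> 2 * (g * v)"
  using assms unfolding xi_trunc_def
  by (auto simp: power2_eq_square abs_if mult_le_cancel_right1 algebra_simps split: if_splits)

lemma xi_bucket_cases: "xi_bucket e t v = 0 \<or> xi_bucket e t v = v"
  unfolding xi_bucket_def by auto

lemma sum_xi_bucket:
  assumes "0 < e"
  shows "(\<Sum>t<W. xi_bucket e t v) = (if e < \<bar>v\<bar> \<and> \<bar>v\<bar> \<le> e * 2^W then v else 0)"
proof (induction W)
  case (Suc W)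
  have "e \<le> e * 2^W" "e * 2^W \<le> e * 2^Suc W" using assms by simp_all
  with Suc show ?case by (auto simp: xi_bucket_def)
qed simp

section \<open>Expected sums along random choices\<close>

fun iterate_choices :: "(nat \<Rightarrow> 'a \<Rightarrow> 'a) \<Rightarrow> 'a \<Rightarrow> nat list \<Rightarrow> nat \<Rightarrow> 'a" where
  "iterate_choices S x ts 0 = x"
| "iterate_choices S x ts (Suc k) = S (ts ! k) (iterate_choices S x ts k)"

lemma iterate_choices_Cons: "iterate_choices S x (t # ts) (Suc k) = iterate_choices S (S t x) ts k"
  by (induction k) auto

definition choice_seqs :: "nat \<Rightarrow> nat \<Rightarrow> nat list set" where
  "choice_seqs W T = {ts. set ts \<subseteq> {..<W} \<and> length ts = T}"

lemma card_choice_seqs: "card (choice_seqs W T) = W ^ T"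
  unfolding choice_seqs_def using card_lists_length_eq[OF finite_lessThan[of W]] by simp

lemma choice_seqs_Suc: "choice_seqs W (Suc T) = (\<lambda>(t, ts). t # ts) ` ({..<W} \<times> choice_seqs W T)"
  unfolding choice_seqs_def
proof (intro set_eqI iffI)
  fix xs assume "xs \<in> {ts. set ts \<subseteq> {..<W} \<and> length ts = Suc T}"
  then obtain t ts where "xs = t # ts" "t < W" "set ts \<subseteq> {..<W}" "length ts = T"
    by (cases xs) auto
  thus "xs \<in> (\<lambda>(t, ts). t # ts) ` ({..<W} \<times> {ts. set ts \<subseteq> {..<W} \<and> length ts = T})"
    by force
qed auto

lemma sum_choice_seqs_Suc:
  "(\<Sum>ts\<in>choice_seqs W (Suc T). G ts) = (\<Sum>t<W. \<Sum>ts\<in>choice_seqs W T. G (t # ts))"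
proof -
  have "inj_on (\<lambda>(t, ts). t # ts) ({..<W} \<times> choice_seqs W T)" by (auto simp: inj_on_def)
  hence "(\<Sum>ts\<in>choice_seqs W (Suc T). G ts) = (\<Sum>(t, ts)\<in>{..<W} \<times> choice_seqs W T. G (t # ts))"
    unfolding choice_seqs_Suc by (subst sum.reindex) (auto simp: case_prod_unfold)
  thus ?thesis by (simp add: sum.cartesian_product)
qed

text \<open>Summing over all \<open>W ^ T\<close> choice sequences is \<open>W ^ T\<close> times the expectation over
  independent uniform choices.\<close>
lemma sum_choice_seqs_iterate_le:
  fixes S :: "nat \<Rightarrow> 'a \<Rightarrow> 'a" and F \<Phi> :: "'a \<Rightarrow> real" and I :: "'a \<Rightarrow> bool"
  assumes W: "0 < W"
    and invariant: "\<And>x t. I x \<Longrightarrow> t < W \<Longrightarrow> I (S t x)"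
    and step: "\<And>x. I x \<Longrightarrow> F x \<le> K + (1 / real W) * (\<Sum>t<W. \<Phi> x - \<Phi> (S t x))"
    and lower: "\<And>x. I x \<Longrightarrow> Lb \<le> \<Phi> x"
    and "I x"
  shows "(\<Sum>ts\<in>choice_seqs W T. \<Sum>k<T. F (iterate_choices S x ts k))
           \<le> real W ^ T * (real T * K + \<Phi> x - Lb)"
  using \<open>I x\<close>
proof (induction T arbitrary: x)
  case 0
  thus ?case using lower by (simp add: choice_seqs_def)
next
  case (Suc T)
  have "(\<Sum>ts\<in>choice_seqs W (Suc T). \<Sum>k<Suc T. F (iterate_choices S x ts k))
      = (\<Sum>t<W. \<Sum>ts\<in>choice_seqs W T. F x + (\<Sum>k<T. F (iterate_choices S (S t x) ts k)))"
    by (simp only: sum_choice_seqs_Suc sum.lessThan_Suc_shift iterate_choices_Cons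
        iterate_choices.simps(1))
  also have "\<dots> = (\<Sum>t<W. real W ^ T * F x + (\<Sum>ts\<in>choice_seqs W T. \<Sum>k<T. F (iterate_choices S (S t x) ts k)))"
    by (simp add: sum.distrib card_choice_seqs)
  also have "\<dots> \<le> (\<Sum>t<W. real W ^ T * F x + real W ^ T * (real T * K + \<Phi> (S t x) - Lb))"
    using Suc.IH invariant[OF Suc.prems] by (intro sum_mono add_left_mono) auto
  also have "\<dots> = real W ^ T * (real W * F x + real W * (real T * K - Lb) + (\<Sum>t<W. \<Phi> (S t x)))"
    by (simp add: sum.distrib sum_subtractf sum_distrib_left algebra_simps)
  also have "\<dots> \<le> real W ^ T * (real W * (real (Suc T) * K + \<Phi> x - Lb))"
  proof -
    have "real W * F x \<le> real W * K + real W * \<Phi> x - (\<Sum>t<W. \<Phi> (S t x))"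
      using mult_left_mono[OF step[OF Suc.prems], of "real W"] W
      by (simp add: sum_subtractf algebra_simps)
    thus ?thesis by (intro mult_left_mono) (auto simp: algebra_simps)
  qed
  finally show ?case by (simp add: mult_ac)
qed

lemma approximation_factor_arith:
  fixes e a Op :: real
  assumes e: "0 < e" "e \<le> 1/2" and a: "0 < a" "a \<le> 1/80" and Op: "1 \<le> Op"
  shows "((1 + e) * (1 + 9/10 * e) * Op + e^3/2) / (1 - e/2)
           + (e/6) / (1 - e/2) * (1 + (4 * (1 + a) / 3) * (1 + 9/10 * e) * Op)
         \<le> (1 + 5 * e) * Op"
proof -
  define B where "B = (1 + e) * (1 + 9/10 * e) + (e^3/2 + e/6) + (e/6) * (27/20) * (1 + 9/10 * e)"
  have "e^2 \<le> e/2" "e^3 \<le> e/4"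
    using e mult_left_mono[of e "1/2" e] mult_mono[of "e^2" "e/2" e "1/2"]
    by (auto simp: power2_eq_square power3_eq_cube)
  moreover have "B = 1 + 55/24 * e + 441/400 * e^2 + e^3/2"
    unfolding B_def by (simp add: field_simps power2_eq_square)
  moreover have "(1 + 5 * e) * (1 - e/2) = 1 + 9/2 * e - 5/2 * e^2"
    by (simp add: algebra_simps power2_eq_square)
  ultimately have B_le: "B \<le> (1 + 5 * e) * (1 - e/2)"
    using e by linarith
  have "(1 + e) * (1 + 9/10 * e) * Op + e^3/2 + (e/6) * (1 + (4 * (1 + a) / 3) * (1 + 9/10 * e) * Op)
      = (1 + e) * (1 + 9/10 * e) * Op + (e^3/2 + e/6) + (e/6) * (4 * (1 + a) / 3) * (1 + 9/10 * e) * Op"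
    by (simp add: algebra_simps)
  also have "\<dots> \<le> (1 + e) * (1 + 9/10 * e) * Op + (e^3/2 + e/6) * Op
                   + (e/6) * (27/20) * (1 + 9/10 * e) * Op"
    using e a Op mult_left_mono[of 1 Op "e^3/2 + e/6"]
    by (intro add_mono mult_right_mono) auto
  also have "\<dots> = B * Op" unfolding B_def by (simp add: algebra_simps)
  also have "\<dots> \<le> (1 + 5 * e) * Op * (1 - e/2)" using B_le Op mult_right_mono by fastforce
  finally have numerator: "(1 + e) * (1 + 9/10 * e) * Op + e^3/2
      + (e/6) * (1 + (4 * (1 + a) / 3) * (1 + 9/10 * e) * Op) \<le> (1 + 5 * e) * Op * (1 - e/2)" .
  have "((1 + e) * (1 + 9/10 * e) * Op + e^3/2) / (1 - e/2)
           + (e/6) / (1 - e/2) * (1 + (4 * (1 + a) / 3) * (1 + 9/10 * e) * Op)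
      = ((1 + e) * (1 + 9/10 * e) * Op + e^3/2
           + (e/6) * (1 + (4 * (1 + a) / 3) * (1 + 9/10 * e) * Op)) / (1 - e/2)"
    by (simp add: add_divide_distrib)
  also have "\<dots> \<le> (1 + 5 * e) * Op" using numerator e by (simp add: pos_divide_le_eq)
  finally show ?thesis .
qed

locale packing_instance =
  fixes A :: "nat \<Rightarrow> nat \<Rightarrow> real" and m n :: nat and eps :: real
  assumes m_pos: "0 < m" and n_pos: "0 < n"
    and A_nonneg: "\<forall>j<m. \<forall>i<n. 0 \<le> A j i"
    and min_colnorm: "Min (colnorm A m ` {..<n}) = 1"
    and eps_pos: "0 < eps" and eps_le: "eps \<le> 1/2"
begin

abbreviation "\<mu> \<equiv> mu n m eps"
abbreviation "\<alpha> \<equiv> alpha n m eps"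
abbreviation "OPT \<equiv> packing_OPT A m n"
abbreviation "w \<equiv> wpar eps"
abbreviation "p x j \<equiv> pvec A m n eps x j"
abbreviation "g x i \<equiv> grad_f A m n eps x i"
abbreviation "x0 \<equiv> x_init A m n eps"

definition log_term :: real where
  "log_term = ln (real n * real m / eps)"

lemma one_le_nm: "1 \<le> real n * real m"
  using m_pos n_pos mult_mono[of 1 "real n" 1 "real m"] by simp

lemma two_le_nm_div_eps: "2 \<le> real n * real m / eps"
  using one_le_nm eps_pos eps_le by (simp add: le_divide_eq)

lemma log_term_ge_half: "1/2 \<le> log_term"
  using ln_2_ge_half two_le_nm_div_eps ln_le_cancel_iff[of 2 "real n * real m / eps"]
  unfolding log_term_def by linarith

lemma exp_log_term: "exp log_term = real n * real m / eps"
  unfolding log_term_def using two_le_nm_div_eps by simp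

lemma mu_eq_log_term: "\<mu> = eps / (4 * log_term)"
  unfolding mu_def log_term_def ..

lemma mu_pos: "0 < \<mu>"
  using mu_eq_log_term eps_pos log_term_ge_half by simp

lemma eps_div_mu: "eps / \<mu> = 4 * log_term"
  using mu_eq_log_term eps_pos log_term_ge_half by simp

lemma mu_le_half_eps: "\<mu> \<le> eps / 2"
  unfolding mu_eq_log_term using log_term_ge_half eps_pos by (intro divide_left_mono) auto

lemma alpha_pos: "0 < \<alpha>"
  using mu_pos by (simp add: alpha_def)

lemma alpha_le: "\<alpha> \<le> 1/80"
  using mu_le_half_eps eps_le by (simp add: alpha_def)

lemma A_le_colnorm: "j < m \<Longrightarrow> A j i \<le> colnorm A m i"
  unfolding colnorm_def by (rule order_trans[OF abs_ge_self], rule Max_ge) auto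

lemma colnorm_attained:
  assumes "i < n" obtains j where "j < m" "A j i = colnorm A m i"
proof -
  have "colnorm A m i \<in> (\<lambda>j. \<bar>A j i\<bar>) ` {..<m}"
    unfolding colnorm_def using m_pos by (intro Max_in) auto
  with that assms A_nonneg show thesis by force
qed

lemma one_le_colnorm: "i < n \<Longrightarrow> 1 \<le> colnorm A m i"
  using min_colnorm Min_le[of "colnorm A m ` {..<n}" "colnorm A m i"] by auto

lemma unit_colnorm_exists: obtains i0 where "i0 < n" "colnorm A m i0 = 1"
proof -
  have "Min (colnorm A m ` {..<n}) \<in> colnorm A m ` {..<n}" using n_pos by (intro Min_in) auto
  thus thesis using that min_colnorm by auto
qed

lemma feasible_le_one:
  assumes "\<forall>i<n. 0 \<le> x i" "\<forall>j<m. matvec A n x j \<le> 1" "i < n"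
  shows "x i \<le> 1"
proof -
  obtain j where j: "j < m" "A j i = colnorm A m i" using colnorm_attained assms(3) by blast
  have "x i \<le> A j i * x i"
    using one_le_colnorm[OF assms(3)] j assms(1,3) mult_right_mono[of 1 "A j i" "x i"] by simp
  also have "\<dots> \<le> matvec A n x j"
    unfolding matvec_def using assms(1,3) A_nonneg j(1)
    by (intro member_le_sum[of i "{..<n}" "\<lambda>k. A j k * x k"]) auto
  also have "\<dots> \<le> 1" using assms(2) j by auto
  finally show ?thesis .
qed

definition feasible_values :: "real set" where
  "feasible_values = {(\<Sum>i<n. x i) | x. (\<forall>i<n. 0 \<le> x i) \<and> (\<forall>j<m. matvec A n x j \<le> 1)}"

lemma feasible_value_le_n: "s \<in> feasible_values \<Longrightarrow> s \<le> real n"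
proof -
  assume "s \<in> feasible_values"
  then obtain x where "s = (\<Sum>i<n. x i)" "\<forall>i<n. 0 \<le> x i" "\<forall>j<m. matvec A n x j \<le> 1"
    unfolding feasible_values_def by blast
  thus ?thesis using sum_mono[of "{..<n}" x "\<lambda>_. 1"] feasible_le_one by simp
qed

lemma sum_le_packing_OPT:
  assumes "\<forall>i<n. 0 \<le> x i" "\<forall>j<m. matvec A n x j \<le> 1"
  shows "(\<Sum>i<n. x i) \<le> OPT"
proof -
  have "bdd_above feasible_values" using feasible_value_le_n by (intro bdd_aboveI)
  moreover have "(\<Sum>i<n. x i) \<in> feasible_values" unfolding feasible_values_def using assms by blast
  ultimately show ?thesis
    unfolding packing_OPT_def feasible_values_def[symmetric] by (rule cSup_upper[rotated])
qed

lemma packing_OPT_le_n: "OPT \<le> real n"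
proof -
  have "0 \<in> feasible_values"
    unfolding feasible_values_def by (rule CollectI, rule exI[of _ "\<lambda>_. 0"]) (simp add: matvec_def)
  thus ?thesis
    unfolding packing_OPT_def feasible_values_def[symmetric]
    using feasible_value_le_n by (intro cSup_least) auto
qed

lemma one_le_packing_OPT: "1 \<le> OPT"
proof -
  obtain i0 where i0: "i0 < n" "colnorm A m i0 = 1" using unit_colnorm_exists by blast
  define x where "x = (\<lambda>i. if i = i0 then (1::real) else 0)"
  have "matvec A n x j = (\<Sum>i<n. if i = i0 then A j i else 0)" for j
    unfolding matvec_def x_def by (intro sum.cong) auto
  hence "matvec A n x j = A j i0" for j using i0(1) by simp
  hence "(\<Sum>i<n. x i) \<le> OPT"
    using i0 A_le_colnorm[of _ i0] by (intro sum_le_packing_OPT) (auto simp: x_def)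
  thus ?thesis unfolding x_def using i0(1) by simp
qed

lemma sum_le_scaled_packing_OPT:
  assumes "\<forall>i<n. 0 \<le> x i" "0 < c" "\<forall>j<m. matvec A n x j \<le> c"
  shows "(\<Sum>i<n. x i) \<le> c * OPT"
proof -
  have "matvec A n (\<lambda>i. x i / c) j = matvec A n x j / c" for j
    unfolding matvec_def by (simp add: sum_divide_distrib)
  hence "(\<Sum>i<n. x i / c) \<le> OPT"
    using assms by (intro sum_le_packing_OPT) auto
  thus ?thesis using assms(2) by (simp add: sum_divide_distrib[symmetric] divide_le_eq mult.commute)
qed

subsection \<open>The smoothed objective\<close>

definition f_mu :: "(nat \<Rightarrow> real) \<Rightarrow> real" where
  "f_mu x = - (\<Sum>i<n. x i) + \<mu> * (\<Sum>j<m. p x j)"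

lemma p_pos: "0 < p x j"
  unfolding pvec_def by simp

lemma one_plus_grad_f: "1 + g x i = (\<Sum>j<m. A j i * p x j)"
  unfolding grad_f_def by simp

lemma grad_f_ge_minus_one: "i < n \<Longrightarrow> -1 \<le> g x i"
proof -
  assume "i < n"
  hence "0 \<le> (\<Sum>j<m. A j i * p x j)"
    using A_nonneg p_pos by (intro sum_nonneg) (simp add: less_imp_le)
  thus ?thesis using one_plus_grad_f[of x i] by linarith
qed

lemma neg_sum_le_f_mu: "- (\<Sum>i<n. x i) \<le> f_mu x"
  unfolding f_mu_def using mu_pos p_pos by (simp add: sum_nonneg less_imp_le)

lemma sum_mult_matvec_swap:
  "(\<Sum>j<m. a j * matvec A n b j) = (\<Sum>i<n. b i * (\<Sum>j<m. A j i * a j))"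
  unfolding matvec_def
  by (simp add: sum_distrib_left mult_ac sum.swap[of _ "{..<m}"])

lemma p_le_of_slack: "matvec A n x j \<le> 1 - s \<Longrightarrow> p x j \<le> exp (- s / \<mu>)"
  unfolding pvec_def using mu_pos by (simp add: divide_le_eq)

lemma m_exp_neg_two_log_term: "real m * exp (- 2 * log_term) \<le> eps^2 / real n"
proof -
  have "real m * exp (- 2 * log_term) = real m * (eps / (real n * real m))^2"
    using exp_of_nat_mult[of 2 log_term] exp_log_term
    by (simp add: exp_minus power_inverse[symmetric] power_divide)
  also have "\<dots> = (eps^2 / real n) / (real n * real m)"
    using m_pos by (simp add: power2_eq_square)
  also have "\<dots> \<le> (eps^2 / real n) / 1"
    using one_le_nm n_pos by (intro divide_left_mono) auto
  finally show ?thesis by simp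
qed

lemma x_init_pos: "i < n \<Longrightarrow> 0 < x0 i"
  unfolding x_init_def using one_le_colnorm[of i] n_pos eps_le by (intro divide_pos_pos mult_pos_pos) auto

lemma matvec_x_init: "j < m \<Longrightarrow> matvec A n x0 j \<le> 1 - eps/2"
proof -
  assume j: "j < m"
  have "A j i * x0 i \<le> (1 - eps/2) / real n" if "i < n" for i
  proof -
    have "A j i * x0 i = (A j i / colnorm A m i) * ((1 - eps/2) / real n)"
      unfolding x_init_def by simp
    also have "\<dots> \<le> (1 - eps/2) / real n"
      using A_le_colnorm[OF j, of i] one_le_colnorm[OF that] A_nonneg j that eps_le n_pos
      by (intro mult_left_le_one_le) (auto simp: divide_le_eq)
    finally show ?thesis .
  qed
  hence "matvec A n x0 j \<le> (\<Sum>i<n. (1 - eps/2) / real n)" unfolding matvec_def by (intro sum_mono) auto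
  thus ?thesis using n_pos by simp
qed

lemma sum_x_init_ge: "(1 - eps/2) / real n \<le> (\<Sum>i<n. x0 i)"
proof -
  obtain i0 where i0: "i0 < n" "colnorm A m i0 = 1" using unit_colnorm_exists by blast
  have "x0 i0 \<le> (\<Sum>i<n. x0 i)" using i0 x_init_pos by (intro member_le_sum) (auto simp: less_imp_le)
  thus ?thesis using i0 unfolding x_init_def by simp
qed

lemma sum_x_init_le: "(\<Sum>i<n. x0 i) \<le> 1"
proof -
  have "x0 i \<le> (1 - eps/2) / real n" if "i < n" for i
    unfolding x_init_def using one_le_colnorm[OF that] n_pos eps_le
    by (intro divide_left_mono) (auto intro: mult_pos_pos)
  hence "(\<Sum>i<n. x0 i) \<le> (\<Sum>i<n. (1 - eps/2) / real n)" by (intro sum_mono) auto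
  thus ?thesis using n_pos eps_pos by simp
qed

text \<open>Each \<open>p\<^sub>j(x\<^sub>0) \<le> exp (- 2 log (nm/\<epsilon>))\<close>, so the barrier term is negligible at \<open>x\<^sub>0\<close>.\<close>
lemma f_mu_x_init_nonpos: "f_mu x0 \<le> 0"
proof -
  have "p x0 j \<le> exp (- 2 * log_term)" if "j < m" for j
    using p_le_of_slack[of x0 j "eps/2"] matvec_x_init[OF that] eps_div_mu
    by (simp add: divide_divide_eq_left'[symmetric])
  hence "(\<Sum>j<m. p x0 j) \<le> real m * exp (- 2 * log_term)"
    using sum_mono[of "{..<m}" "p x0" "\<lambda>_. exp (- 2 * log_term)"] by simp
  also have "\<dots> \<le> 1 / real n"
    using m_exp_neg_two_log_term eps_pos eps_le power_le_one[of eps 2]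
      divide_right_mono[of "eps^2" 1 "real n"] by simp
  finally have "\<mu> * (\<Sum>j<m. p x0 j) \<le> eps / 2 * (1 / real n)"
    using mu_pos mu_le_half_eps by (intro mult_mono) (auto intro: sum_nonneg less_imp_le p_pos)
  also have "\<dots> \<le> (1 - eps/2) / real n"
    using eps_le n_pos divide_right_mono[of "eps/2" "1 - eps/2" "real n"] by simp
  finally show ?thesis unfolding f_mu_def using sum_x_init_ge by linarith
qed

lemma matvec_diff: "matvec A n y j - matvec A n x j = matvec A n (\<lambda>i. y i - x i) j"
  unfolding matvec_def by (simp add: right_diff_distrib sum_subtractf)

lemma mu_p_le_second_order:
  assumes "\<bar>matvec A n y j - matvec A n x j\<bar> \<le> \<mu>"
  defines "\<Delta> \<equiv> matvec A n y j - matvec A n x j"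
  shows "\<mu> * p y j \<le> \<mu> * p x j + p x j * \<Delta> + p x j * \<Delta>^2 / \<mu>"
proof -
  have "p y j = p x j * exp (\<Delta> / \<mu>)"
    unfolding pvec_def \<Delta>_def by (simp flip: exp_add) (simp add: diff_divide_distrib)
  also have "\<dots> \<le> p x j * (1 + \<Delta> / \<mu> + (\<Delta> / \<mu>)^2)"
    using assms mu_pos p_pos[of x j] exp_le_quadratic[of "\<Delta> / \<mu>"]
    by (intro mult_left_mono) (auto simp: abs_divide divide_le_eq \<Delta>_def)
  finally have "\<mu> * p y j \<le> \<mu> * (p x j * (1 + \<Delta> / \<mu> + (\<Delta> / \<mu>)^2))"
    using mu_pos by (intro mult_left_mono) auto
  also have "\<dots> = \<mu> * p x j + p x j * \<Delta> + p x j * \<Delta>^2 / \<mu>"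
    using mu_pos by (simp add: field_simps power2_eq_square)
  finally show ?thesis .
qed

lemma f_mu_le_second_order:
  assumes "\<forall>j<m. \<bar>matvec A n y j - matvec A n x j\<bar> \<le> \<mu>"
  shows "f_mu y \<le> f_mu x + (\<Sum>i<n. g x i * (y i - x i))
                   + (\<Sum>j<m. p x j * (matvec A n y j - matvec A n x j)^2) / \<mu>"
proof -
  have "\<mu> * (\<Sum>j<m. p y j) \<le> (\<Sum>j<m. \<mu> * p x j + p x j * (matvec A n y j - matvec A n x j)
                                   + p x j * (matvec A n y j - matvec A n x j)^2 / \<mu>)"
    unfolding sum_distrib_left using assms mu_p_le_second_order by (intro sum_mono) auto
  also have "\<dots> = \<mu> * (\<Sum>j<m. p x j) + (\<Sum>j<m. p x j * (matvec A n y j - matvec A n x j))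
                   + (\<Sum>j<m. p x j * (matvec A n y j - matvec A n x j)^2) / \<mu>"
    by (simp add: sum.distrib sum_distrib_left sum_divide_distrib)
  also have "(\<Sum>j<m. p x j * (matvec A n y j - matvec A n x j)) = (\<Sum>i<n. (y i - x i) * (1 + g x i))"
    unfolding matvec_diff sum_mult_matvec_swap one_plus_grad_f ..
  finally show ?thesis
    unfolding f_mu_def by (simp add: algebra_simps sum.distrib sum_subtractf)
qed

subsection \<open>One multiplicative step\<close>

definition mw_update :: "(nat \<Rightarrow> real) \<Rightarrow> (nat \<Rightarrow> real) \<Rightarrow> nat \<Rightarrow> real" where
  "mw_update v x i = x i * exp (- \<alpha> * v i)"

lemma abs_mw_update_diff:
  assumes "0 \<le> x i" "\<bar>v i\<bar> \<le> 1"
  shows "\<bar>mw_update v x i - x i\<bar> \<le> (1 + \<alpha>) * \<alpha> * (x i * \<bar>v i\<bar>)"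
proof -
  have "\<bar>\<alpha> * v i\<bar> \<le> \<alpha>"
    using assms alpha_pos by (simp add: abs_mult mult_left_le)
  hence "\<bar>exp (- (\<alpha> * v i)) - 1\<bar> \<le> (1 + \<alpha>) * (\<alpha> * \<bar>v i\<bar>)"
    using abs_exp_neg_minus_one_le[of "\<alpha> * v i" \<alpha>] alpha_pos alpha_le by (simp add: abs_mult)
  hence "x i * \<bar>exp (- (\<alpha> * v i)) - 1\<bar> \<le> x i * ((1 + \<alpha>) * (\<alpha> * \<bar>v i\<bar>))"
    using assms(1) by (rule mult_left_mono)
  moreover have "mw_update v x i - x i = x i * (exp (- (\<alpha> * v i)) - 1)"
    unfolding mw_update_def by (simp add: algebra_simps)
  ultimately show ?thesis using assms(1) by (simp add: abs_mult mult_ac)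
qed

lemma sq_matvec_mw_update_diff:
  assumes j: "j < m" and x: "\<forall>i<n. 0 \<le> x i" and v: "\<forall>i<n. \<bar>v i\<bar> \<le> 1"
  shows "(matvec A n (mw_update v x) j - matvec A n x j)^2
           \<le> ((1 + \<alpha>) * \<alpha>)^2 * (matvec A n x j * (\<Sum>i<n. A j i * x i * (v i)^2))"
proof -
  have A: "\<And>i. i < n \<Longrightarrow> 0 \<le> A j i" using A_nonneg j by auto
  have "\<bar>matvec A n (mw_update v x) j - matvec A n x j\<bar> \<le> (\<Sum>i<n. A j i * \<bar>mw_update v x i - x i\<bar>)"
    unfolding matvec_diff unfolding matvec_def using A
    by (auto intro: order_trans[OF sum_abs] simp: abs_mult right_diff_distrib[symmetric])
  also have "\<dots> \<le> (\<Sum>i<n. A j i * ((1 + \<alpha>) * \<alpha> * (x i * \<bar>v i\<bar>)))"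
    using A x v abs_mw_update_diff by (intro sum_mono mult_left_mono) auto
  also have "\<dots> = (1 + \<alpha>) * \<alpha> * (\<Sum>i<n. (A j i * x i) * \<bar>v i\<bar>)"
    by (simp add: sum_distrib_left mult_ac)
  finally have "\<bar>matvec A n (mw_update v x) j - matvec A n x j\<bar>^2
                  \<le> ((1 + \<alpha>) * \<alpha> * (\<Sum>i<n. (A j i * x i) * \<bar>v i\<bar>))^2"
    by (rule power_mono) simp
  hence "(matvec A n (mw_update v x) j - matvec A n x j)^2
                  \<le> ((1 + \<alpha>) * \<alpha>)^2 * (\<Sum>i<n. (A j i * x i) * \<bar>v i\<bar>)^2"
    by (simp add: power_mult_distrib)
  also have "\<dots> \<le> ((1 + \<alpha>) * \<alpha>)^2 * (matvec A n x j * (\<Sum>i<n. A j i * x i * (v i)^2))"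
    using weighted_Cauchy_Schwarz[of "{..<n}" "\<lambda>i. A j i * x i" "\<lambda>i. \<bar>v i\<bar>"] A x
    by (intro mult_left_mono) (auto simp: matvec_def)
  finally show ?thesis .
qed

lemma sum_p_weighted_sq_le:
  assumes x: "\<forall>i<n. 0 \<le> x i" and v: "\<forall>i<n. (v i)^2 * (1 + g x i) \<le> 2 * (g x i * v i)"
  shows "(\<Sum>j<m. p x j * (\<Sum>i<n. A j i * x i * (v i)^2)) \<le> 2 * (\<Sum>i<n. g x i * v i * x i)"
proof -
  have "(\<Sum>j<m. p x j * (\<Sum>i<n. A j i * x i * (v i)^2)) = (\<Sum>i<n. (x i * (v i)^2) * (1 + g x i))"
    using sum_mult_matvec_swap[of "p x" "\<lambda>i. x i * (v i)^2"] unfolding matvec_def one_plus_grad_f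
    by (simp add: mult_ac)
  also have "\<dots> \<le> (\<Sum>i<n. x i * (2 * (g x i * v i)))"
    using x v by (intro sum_mono) (simp add: mult.assoc mult_left_mono)
  finally show ?thesis by (simp add: sum_distrib_left mult_ac)
qed

lemma mu_eq_alpha: "\<mu> = 20 * \<alpha>"
  unfolding alpha_def by simp

lemma sq_matvec_mw_update_diff_le:
  assumes j: "j < m" and x: "\<forall>i<n. 0 \<le> x i" and v: "\<forall>i<n. \<bar>v i\<bar> \<le> 1"
    and load: "matvec A n x j \<le> 3/2"
  shows "(matvec A n (mw_update v x) j - matvec A n x j)^2
           \<le> ((1 + \<alpha>) * \<alpha>)^2 * (3/2) * (\<Sum>i<n. A j i * x i * (v i)^2)"
proof -
  have "0 \<le> (\<Sum>i<n. A j i * x i * (v i)^2)"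
    using A_nonneg j x by (intro sum_nonneg mult_nonneg_nonneg) auto
  with load have "matvec A n x j * (\<Sum>i<n. A j i * x i * (v i)^2) \<le> 3/2 * (\<Sum>i<n. A j i * x i * (v i)^2)"
    by (rule mult_right_mono)
  hence "((1 + \<alpha>) * \<alpha>)^2 * (matvec A n x j * (\<Sum>i<n. A j i * x i * (v i)^2))
           \<le> ((1 + \<alpha>) * \<alpha>)^2 * (3/2 * (\<Sum>i<n. A j i * x i * (v i)^2))"
    by (rule mult_left_mono) simp
  with sq_matvec_mw_update_diff[OF j x v] show ?thesis by (simp add: mult.assoc)
qed

lemma abs_matvec_mw_update_diff_le_mu:
  assumes j: "j < m" and x: "\<forall>i<n. 0 \<le> x i" and v: "\<forall>i<n. \<bar>v i\<bar> \<le> 1"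
    and load: "matvec A n x j \<le> 3/2"
  shows "\<bar>matvec A n (mw_update v x) j - matvec A n x j\<bar> \<le> \<mu>"
proof -
  define k where "k = (1 + \<alpha>) * \<alpha>"
  have "(\<Sum>i<n. A j i * x i * (v i)^2) \<le> matvec A n x j"
    unfolding matvec_def using A_nonneg j x v
    by (intro sum_mono mult_left_le) (auto simp: abs_square_le_1)
  hence "k^2 * (3/2) * (\<Sum>i<n. A j i * x i * (v i)^2) \<le> k^2 * (3/2) * (3/2)"
    using load by (intro mult_left_mono) auto
  with sq_matvec_mw_update_diff_le[OF assms]
  have "\<bar>matvec A n (mw_update v x) j - matvec A n x j\<bar>^2 \<le> k^2 * (3/2) * (3/2)"
    unfolding k_def by simp
  hence "\<bar>matvec A n (mw_update v x) j - matvec A n x j\<bar>^2 \<le> (k * (3/2))^2"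
    by (simp add: power2_eq_square)
  hence "\<bar>matvec A n (mw_update v x) j - matvec A n x j\<bar> \<le> k * (3/2)"
    by (rule power2_le_imp_le) (use alpha_pos in \<open>simp add: k_def\<close>)
  also have "\<dots> \<le> \<mu>"
    using mult_right_mono[of "1 + \<alpha>" 2 \<alpha>] alpha_pos alpha_le mu_eq_alpha unfolding k_def by linarith
  finally show ?thesis .
qed

lemma sum_grad_mult_mw_update_diff_le:
  assumes x: "\<forall>i<n. 0 \<le> x i" and v: "\<forall>i<n. \<bar>v i\<bar> \<le> 1" and gv: "\<forall>i<n. 0 \<le> g x i * v i"
  shows "(\<Sum>i<n. g x i * (mw_update v x i - x i)) \<le> - ((1 - \<alpha>) * \<alpha> * (\<Sum>i<n. g x i * v i * x i))"
proof -
  have "g x i * (mw_update v x i - x i) \<le> - ((1 - \<alpha>) * \<alpha> * (g x i * v i * x i))" if "i < n" for i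
  proof -
    have "0 \<le> g x i * (\<alpha> * v i)"
      using that gv alpha_pos mult_nonneg_nonneg[of \<alpha> "g x i * v i"] by (simp add: mult.left_commute)
    moreover have "\<bar>\<alpha> * v i\<bar> \<le> \<alpha>"
      using that v alpha_pos by (simp add: abs_mult mult_left_le)
    ultimately have "g x i * (exp (- (\<alpha> * v i)) - 1) \<le> - ((1 - \<alpha>) * (g x i * (\<alpha> * v i)))"
      using alpha_le by (intro mult_exp_neg_minus_one_le) auto
    hence "x i * (g x i * (exp (- (\<alpha> * v i)) - 1)) \<le> x i * (- ((1 - \<alpha>) * (g x i * (\<alpha> * v i))))"
      using x that by (intro mult_left_mono) auto
    thus ?thesis unfolding mw_update_def by (simp add: algebra_simps)
  qed
  hence "(\<Sum>i<n. g x i * (mw_update v x i - x i)) \<le> (\<Sum>i<n. - ((1 - \<alpha>) * \<alpha> * (g x i * v i * x i)))"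
    by (intro sum_mono) auto
  thus ?thesis by (simp add: sum_negf sum_distrib_left)
qed

lemma sum_p_sq_matvec_mw_update_diff_le:
  assumes x: "\<forall>i<n. 0 \<le> x i" and load: "\<forall>j<m. matvec A n x j \<le> 3/2"
    and v: "\<forall>i<n. \<bar>v i\<bar> \<le> 1" and v2: "\<forall>i<n. (v i)^2 * (1 + g x i) \<le> 2 * (g x i * v i)"
  shows "(\<Sum>j<m. p x j * (matvec A n (mw_update v x) j - matvec A n x j)^2) / \<mu>
           \<le> 3/20 * (1 + \<alpha>)^2 * \<alpha> * (\<Sum>i<n. g x i * v i * x i)"
proof -
  define k where "k = (1 + \<alpha>) * \<alpha>"
  define Q where "Q = (\<Sum>i<n. g x i * v i * x i)"
  have "(\<Sum>j<m. p x j * (matvec A n (mw_update v x) j - matvec A n x j)^2)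
          \<le> (\<Sum>j<m. p x j * (k^2 * (3/2) * (\<Sum>i<n. A j i * x i * (v i)^2)))"
    unfolding k_def using sq_matvec_mw_update_diff_le x v load p_pos
    by (intro sum_mono mult_left_mono) (auto simp: less_imp_le)
  also have "\<dots> = k^2 * (3/2) * (\<Sum>j<m. p x j * (\<Sum>i<n. A j i * x i * (v i)^2))"
    by (simp add: sum_distrib_left mult_ac)
  also have "\<dots> \<le> k^2 * 3 * Q"
    using mult_left_mono[OF sum_p_weighted_sq_le[OF x v2], of "k^2 * (3/2)"] unfolding Q_def by simp
  finally have "(\<Sum>j<m. p x j * (matvec A n (mw_update v x) j - matvec A n x j)^2) / \<mu> \<le> k^2 * 3 * Q / \<mu>"
    using mu_pos divide_right_mono[of _ "k^2 * 3 * Q" \<mu>] by (simp add: mult_ac)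
  also have "\<dots> = 3/20 * (1 + \<alpha>)^2 * \<alpha> * Q"
    unfolding k_def mu_eq_alpha using alpha_pos by (simp add: power2_eq_square)
  finally show ?thesis unfolding Q_def .
qed

text \<open>With \<open>\<alpha> \<le> 1/80\<close> the quadratic loss \<open>3/20 (1+\<alpha>)\<^sup>2\<close> eats at most a quarter of the linear gain.\<close>
lemma f_mu_mw_update_descent:
  assumes x: "\<forall>i<n. 0 < x i" and load: "\<forall>j<m. matvec A n x j \<le> 3/2"
    and v: "\<forall>i<n. \<bar>v i\<bar> \<le> 1" and gv: "\<forall>i<n. 0 \<le> g x i * v i"
    and v2: "\<forall>i<n. (v i)^2 * (1 + g x i) \<le> 2 * (g x i * v i)"
  shows "f_mu (mw_update v x) \<le> f_mu x - 3/4 * \<alpha> * (\<Sum>i<n. g x i * v i * x i)"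
proof -
  define Q where "Q = (\<Sum>i<n. g x i * v i * x i)"
  have x_nonneg: "\<forall>i<n. 0 \<le> x i" using x by (simp add: less_imp_le)
  have small: "\<forall>j<m. \<bar>matvec A n (mw_update v x) j - matvec A n x j\<bar> \<le> \<mu>"
    using abs_matvec_mw_update_diff_le_mu[OF _ x_nonneg v] load by blast
  have f_bound: "f_mu (mw_update v x) \<le> f_mu x - (1 - \<alpha>) * \<alpha> * Q + 3/20 * (1 + \<alpha>)^2 * \<alpha> * Q"
    using f_mu_le_second_order[OF small]
      sum_grad_mult_mw_update_diff_le[OF x_nonneg v gv]
      sum_p_sq_matvec_mw_update_diff_le[OF x_nonneg load v v2]
    unfolding Q_def by linarith
  have "0 \<le> Q"
    unfolding Q_def using gv x_nonneg mult_nonneg_nonneg[of "g x _ * v _" "x _"]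
    by (intro sum_nonneg) auto
  moreover have "3/4 + 3/20 * (1 + \<alpha>)^2 \<le> 1 - \<alpha>"
    using alpha_pos alpha_le power_mono[of "1 + \<alpha>" "81/80" 2] by (simp add: power2_eq_square)
  ultimately have "(3/4 + 3/20 * (1 + \<alpha>)^2) * (\<alpha> * Q) \<le> (1 - \<alpha>) * (\<alpha> * Q)"
    using alpha_pos by (intro mult_right_mono) auto
  with f_bound show ?thesis unfolding Q_def by (simp add: algebra_simps)
qed

subsection \<open>The invariant\<close>

lemma wpar_props: "1 \<le> w" "1 \<le> eps * 2 ^ w"
proof -
  have "log 2 2 \<le> log 2 (1/eps)"
    using eps_pos eps_le by (subst log_le_cancel_iff) (auto simp: field_simps)
  hence log_ge: "1 \<le> log 2 (1/eps)" by simp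
  hence log_le: "log 2 (1/eps) \<le> real w"
    unfolding wpar_def by linarith
  show "1 \<le> w" using log_ge log_le by linarith
  have "1/eps = 2 powr (log 2 (1/eps))" using eps_pos by simp
  also have "\<dots> \<le> 2 ^ w" using log_le by (simp add: powr_realpow[symmetric])
  finally show "1 \<le> eps * 2 ^ w" using eps_pos by (simp add: field_simps)
qed

definition step_dir :: "nat \<Rightarrow> (nat \<Rightarrow> real) \<Rightarrow> nat \<Rightarrow> real" where
  "step_dir t x i = xi_bucket eps t (xi_trunc eps (g x i))"

lemma alg_step_eq_mw_update: "alg_step A m n eps t x = mw_update (step_dir t x) x"
  by (rule ext) (simp add: alg_step_def mw_update_def step_dir_def)

lemma xi_trunc_grad_props:
  fixes x :: "nat \<Rightarrow> real"
  assumes "i < n"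
  defines "v \<equiv> xi_trunc eps (g x i)"
  shows "\<bar>v\<bar> \<le> 1" "0 \<le> g x i * v" "v = 0 \<or> eps < \<bar>v\<bar>" "g x i \<le> v + eps + g x i * v"
    "v^2 \<le> g x i * v" "v^2 * (1 + g x i) \<le> 2 * (g x i * v)"
  unfolding v_def using xi_trunc_props[OF grad_f_ge_minus_one[OF assms(1)] eps_pos eps_le] by auto

lemma step_dir_props:
  assumes "i < n"
  shows "\<bar>step_dir t x i\<bar> \<le> 1" "0 \<le> g x i * step_dir t x i"
    "(step_dir t x i)^2 \<le> g x i * step_dir t x i"
    "(step_dir t x i)^2 * (1 + g x i) \<le> 2 * (g x i * step_dir t x i)"
  using xi_bucket_cases[of eps t "xi_trunc eps (g x i)"] xi_trunc_grad_props(1,2,5,6)[OF assms, of x]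
  by (auto simp: step_dir_def)

lemma sum_step_dir: "i < n \<Longrightarrow> (\<Sum>t<w. step_dir t x i) = xi_trunc eps (g x i)"
  unfolding step_dir_def sum_xi_bucket[OF eps_pos]
  using xi_trunc_grad_props(1,3)[of i x] wpar_props(2) by auto

definition invariant :: "(nat \<Rightarrow> real) \<Rightarrow> bool" where
  "invariant x \<longleftrightarrow> (\<forall>i<n. 0 < x i) \<and> f_mu x \<le> 0 \<and> (\<forall>j<m. matvec A n x j \<le> 1 + 9/10 * eps)"

lemma invariant_x_init: "invariant x0"
  unfolding invariant_def using x_init_pos f_mu_x_init_nonpos matvec_x_init eps_pos by fastforce

lemma p_le_of_f_mu_nonpos:
  assumes y: "\<forall>i<n. 0 \<le> y i" and f: "f_mu y \<le> 0"
    and c: "0 < c" and load: "\<forall>j<m. matvec A n y j \<le> c" and j: "j < m"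
  shows "p y j \<le> c * real n / \<mu>"
proof -
  have "\<mu> * p y j \<le> \<mu> * (\<Sum>j<m. p y j)"
    using mu_pos j p_pos by (intro mult_left_mono member_le_sum) (auto simp: less_imp_le)
  also have "\<dots> \<le> (\<Sum>i<n. y i)" using f unfolding f_mu_def by simp
  also have "\<dots> \<le> c * OPT" using sum_le_scaled_packing_OPT y c load by blast
  also have "\<dots> \<le> c * real n" using packing_OPT_le_n c by simp
  finally show ?thesis using mu_pos by (simp add: pos_le_divide_eq mult.commute)
qed

text \<open>Width reduction: \<open>f\<^sub>\<mu>(y) \<le> 0\<close> gives \<open>\<mu> p\<^sub>j(y) \<le> \<Sum> y \<le> c n\<close>, and taking logarithms
  turns this into a bound on the load \<open>(Ay)\<^sub>j = 1 + \<mu> ln p\<^sub>j(y)\<close>.\<close>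
lemma load_le_of_f_mu_nonpos:
  assumes y: "\<forall>i<n. 0 \<le> y i" and f: "f_mu y \<le> 0"
    and c: "0 < c" "c \<le> 3/2" and load: "\<forall>j<m. matvec A n y j \<le> c" and j: "j < m"
  shows "matvec A n y j \<le> 1 + 9/10 * eps"
proof -
  have "p y j \<le> c * real n / \<mu>"
    using p_le_of_f_mu_nonpos[OF y f c(1) load j] .
  also have "\<dots> = (real n / eps) * (4 * c * log_term)"
    unfolding mu_eq_log_term using eps_pos log_term_ge_half by (simp add: field_simps)
  finally have "p y j \<le> (real n / eps) * (4 * c * log_term)" .
  hence "ln (p y j) \<le> ln ((real n / eps) * (4 * c * log_term))"
    using p_pos[of y j] by simp
  also have "\<dots> = ln (real n / eps) + ln (4 * c * log_term)"
    using n_pos eps_pos c log_term_ge_half by (intro ln_mult_pos) auto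
  also have "\<dots> \<le> log_term + 4 * c * log_term / exp 1"
  proof -
    have "ln (real n / eps) \<le> log_term"
      unfolding log_term_def using n_pos m_pos eps_pos by (simp add: divide_right_mono)
    moreover have "ln (4 * c * log_term) \<le> 4 * c * log_term / exp 1"
      using c log_term_ge_half by (intro ln_le_divide_exp_1) auto
    ultimately show ?thesis by linarith
  qed
  finally have "matvec A n y j - 1 \<le> \<mu> * (log_term + 4 * c * log_term / exp 1)"
    using mu_pos unfolding pvec_def by (simp add: field_simps)
  also have "\<dots> = eps / 4 * (1 + 4 * c / exp 1)"
    unfolding mu_eq_log_term using log_term_ge_half by (simp add: field_simps)
  also have "\<dots> \<le> 9/10 * eps"
  proof -
    have "4 * c / exp 1 \<le> 4 * (3/2) / (64/27)"
      using c exp_1_ge_64_27 by (intro frac_le) auto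
    thus ?thesis using eps_pos by simp
  qed
  finally show ?thesis by simp
qed

lemma matvec_mw_update_le:
  assumes x: "\<forall>i<n. 0 \<le> x i" and v: "\<forall>i<n. \<bar>v i\<bar> \<le> 1" and j: "j < m"
  shows "matvec A n (mw_update v x) j \<le> exp \<alpha> * matvec A n x j"
proof -
  have "mw_update v x i \<le> exp \<alpha> * x i" if "i < n" for i
    using x v that alpha_pos mult_left_mono[of "- v i" 1 \<alpha>]
    unfolding mw_update_def by (simp add: abs_le_iff mult.commute mult_left_mono)
  thus ?thesis
    unfolding matvec_def sum_distrib_left using A_nonneg j
    by (intro sum_mono) (simp add: mult.left_commute mult_left_mono)
qed

lemma exp_alpha_mult_load_bound_le: "exp \<alpha> * (1 + 9/10 * eps) \<le> 3/2"
proof -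
  have "exp \<alpha> \<le> 1 + \<alpha> + \<alpha>^2" using alpha_pos alpha_le by (intro exp_le_quadratic) auto
  also have "\<dots> \<le> 81/80 + 1/6400"
    using alpha_pos alpha_le power_mono[of \<alpha> "1/80" 2] by (simp add: power_divide)
  finally show ?thesis
    using eps_pos eps_le mult_mono[of "exp \<alpha>" "81/80 + 1/6400" "1 + 9/10 * eps" "29/20"] by simp
qed

lemma invariant_alg_step:
  assumes "invariant x" shows "invariant (alg_step A m n eps t x)"
proof -
  let ?v = "step_dir t x"
  have x: "\<forall>i<n. 0 < x i" and f: "f_mu x \<le> 0" and load: "\<forall>j<m. matvec A n x j \<le> 1 + 9/10 * eps"
    using assms unfolding invariant_def by auto
  have x_nonneg: "\<forall>i<n. 0 \<le> x i" using x by (simp add: less_imp_le)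
  have x': "\<forall>i<n. 0 < mw_update ?v x i" using x unfolding mw_update_def by simp
  have "f_mu (mw_update ?v x) \<le> f_mu x - 3/4 * \<alpha> * (\<Sum>i<n. g x i * ?v i * x i)"
    using x load eps_le step_dir_props by (intro f_mu_mw_update_descent) auto
  moreover have "0 \<le> (\<Sum>i<n. g x i * ?v i * x i)"
    using step_dir_props(2) x_nonneg mult_nonneg_nonneg[of "g x _ * ?v _" "x _"]
    by (intro sum_nonneg) simp
  ultimately have f': "f_mu (mw_update ?v x) \<le> 0"
    using f alpha_pos mult_nonneg_nonneg[of "3/4 * \<alpha>" "\<Sum>i<n. g x i * ?v i * x i"] by linarith
  have v: "\<forall>i<n. \<bar>?v i\<bar> \<le> 1" using step_dir_props(1) by blast
  have "matvec A n (mw_update ?v x) j \<le> exp \<alpha> * (1 + 9/10 * eps)" if "j < m" for j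
    using matvec_mw_update_le[OF x_nonneg v that] load that by (simp add: order_trans)
  hence "\<forall>j<m. matvec A n (mw_update ?v x) j \<le> 1 + 9/10 * eps"
    using x' eps_pos
    by (intro allI impI load_le_of_f_mu_nonpos[OF _ f' _ exp_alpha_mult_load_bound_le])
      (auto simp: less_imp_le)
  thus ?thesis unfolding invariant_def alg_step_eq_mw_update using x' f' by blast
qed

lemma sum_mw_update_le:
  assumes x: "\<forall>i<n. 0 \<le> x i" and v: "\<forall>i<n. \<bar>v i\<bar> \<le> 1"
  shows "(\<Sum>i<n. mw_update v x i)
           \<le> (\<Sum>i<n. x i) - \<alpha> * (\<Sum>i<n. v i * x i) + \<alpha>^2 * (\<Sum>i<n. (v i)^2 * x i)"
proof -
  have "mw_update v x i \<le> x i - \<alpha> * (v i * x i) + \<alpha>^2 * ((v i)^2 * x i)" if "i < n" for i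
  proof -
    have "\<bar>- (\<alpha> * v i)\<bar> \<le> 1"
      using v that alpha_pos alpha_le mult_mono[of \<alpha> 1 "\<bar>v i\<bar>" 1] by (simp add: abs_mult)
    hence "x i * exp (- (\<alpha> * v i)) \<le> x i * (1 + (- (\<alpha> * v i)) + (- (\<alpha> * v i))^2)"
      using x that exp_le_quadratic[of "- (\<alpha> * v i)"] by (intro mult_left_mono) auto
    thus ?thesis unfolding mw_update_def by (simp add: algebra_simps power2_eq_square)
  qed
  hence "(\<Sum>i<n. mw_update v x i) \<le> (\<Sum>i<n. x i - \<alpha> * (v i * x i) + \<alpha>^2 * ((v i)^2 * x i))"
    by (intro sum_mono) auto
  thus ?thesis by (simp add: sum.distrib sum_subtractf sum_distrib_left)
qed

subsection \<open>Potential and expected progress\<close>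

definition potential :: "(nat \<Rightarrow> real) \<Rightarrow> real" where
  "potential x = (1 / \<alpha>) * (\<Sum>i<n. x i) + 4 * (1 + \<alpha>) / (3 * \<alpha>) * f_mu x"

text \<open>One step in bucket \<open>t\<close> pays for the \<open>t\<close>-th slice of the first-order terms: the mirror-descent
  bound pays for \<open>\<Sum> v x\<close> through \<open>\<Sum> x\<close>, the descent lemma pays for \<open>\<Sum> g v x\<close> through \<open>f\<^sub>\<mu>\<close>.\<close>
lemma bucket_progress:
  fixes t :: nat and x :: "nat \<Rightarrow> real"
  assumes "invariant x"
  defines "v \<equiv> step_dir t x"
  shows "(\<Sum>i<n. v i * x i) + (\<Sum>i<n. g x i * v i * x i)
           \<le> potential x - potential (alg_step A m n eps t x)"
proof -
  define Q where "Q = (\<Sum>i<n. g x i * v i * x i)"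
  have x: "\<forall>i<n. 0 < x i" and load: "\<forall>j<m. matvec A n x j \<le> 1 + 9/10 * eps"
    using assms unfolding invariant_def by auto
  have al: "0 < \<alpha>" "\<alpha> \<le> 1/80" using alpha_pos alpha_le by auto
  have step: "alg_step A m n eps t x = mw_update v x"
    unfolding v_def by (rule alg_step_eq_mw_update)
  have "f_mu (mw_update v x) \<le> f_mu x - 3/4 * \<alpha> * Q"
    unfolding Q_def v_def using x load eps_le step_dir_props
    by (intro f_mu_mw_update_descent) auto
  hence "(1 + \<alpha>) * (3/4 * \<alpha> * Q) \<le> (1 + \<alpha>) * (f_mu x - f_mu (mw_update v x))"
    using al by (intro mult_left_mono) auto
  hence Q_le: "(1 + \<alpha>) * Q \<le> 4 * (1 + \<alpha>) / (3 * \<alpha>) * (f_mu x - f_mu (mw_update v x))"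
    using al by (simp add: field_simps)
  have "(\<Sum>i<n. (v i)^2 * x i) \<le> Q"
    unfolding Q_def v_def using step_dir_props(3) x by (intro sum_mono mult_right_mono) (auto simp: less_imp_le)
  hence "\<alpha> * (\<Sum>i<n. v i * x i) \<le> (\<Sum>i<n. x i) - (\<Sum>i<n. mw_update v x i) + \<alpha>^2 * Q"
    using sum_mw_update_le[of x v] x step_dir_props(1) mult_left_mono[of _ Q "\<alpha>^2"]
    unfolding v_def by (fastforce simp: less_imp_le)
  hence "(\<Sum>i<n. v i * x i) \<le> (1 / \<alpha>) * ((\<Sum>i<n. x i) - (\<Sum>i<n. mw_update v x i)) + \<alpha> * Q"
    using al by (simp add: field_simps power2_eq_square)
  moreover have "potential x - potential (mw_update v x)
      = (1 / \<alpha>) * ((\<Sum>i<n. x i) - (\<Sum>i<n. mw_update v x i))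
        + 4 * (1 + \<alpha>) / (3 * \<alpha>) * (f_mu x - f_mu (mw_update v x))"
    unfolding potential_def by (simp add: algebra_simps diff_divide_distrib)
  moreover have "(1 + \<alpha>) * Q = Q + \<alpha> * Q" by (simp add: algebra_simps)
  ultimately show ?thesis
    unfolding step Q_def[symmetric] using Q_le by linarith
qed

text \<open>A row with slack \<open>s \<ge> \<epsilon>/2\<close> has \<open>p\<^sub>j = e\<^sup>-\<^sup>s\<^sup>/\<^sup>\<mu>\<close>, and \<open>s e\<^sup>-\<^sup>s\<^sup>/\<^sup>\<mu>\<close> is largest at \<open>s = \<epsilon>/2\<close>.\<close>
lemma p_mult_slack_le: "p x j * (1 - matvec A n x j) \<le> eps/2 * p x j + eps/2 * exp (- 2 * log_term)"
proof (cases "1 - matvec A n x j \<le> eps/2")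
  case True
  hence "p x j * (1 - matvec A n x j) \<le> eps/2 * p x j"
    using p_pos[of x j] mult_left_mono[of _ "eps/2" "p x j"] by (simp add: mult.commute)
  thus ?thesis using eps_pos by (simp add: add_increasing2)
next
  case False
  define s where "s = 1 - matvec A n x j"
  have "p x j = exp (- s / \<mu>)" unfolding pvec_def s_def by (simp add: field_simps)
  hence "p x j * s \<le> eps/2 * exp (- (eps/2) / \<mu>)"
    using mult_exp_neg_divide_antimono[of \<mu> "eps/2" s] mu_pos mu_le_half_eps False
    by (simp add: s_def mult.commute)
  also have "- (eps/2) / \<mu> = - 2 * log_term" using eps_div_mu by (simp add: field_simps)
  finally show ?thesis
    using eps_pos p_pos[of x j] mult_nonneg_nonneg[of "eps/2" "p x j"] unfolding s_def by linarith
qed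

lemma sum_p_mult_slack_le: "(\<Sum>j<m. p x j * (1 - matvec A n x j)) \<le> eps/2 * (\<Sum>j<m. p x j) + eps^3/2"
proof -
  have "(\<Sum>j<m. p x j * (1 - matvec A n x j)) \<le> (\<Sum>j<m. eps/2 * p x j + eps/2 * exp (- 2 * log_term))"
    using p_mult_slack_le by (intro sum_mono) auto
  also have "\<dots> = eps/2 * (\<Sum>j<m. p x j) + eps/2 * (real m * exp (- 2 * log_term))"
    by (simp add: sum.distrib sum_distrib_left)
  also have "\<dots> \<le> eps/2 * (\<Sum>j<m. p x j) + eps/2 * eps^2"
  proof -
    have "eps^2 / real n \<le> eps^2 / 1" using n_pos by (intro divide_left_mono) auto
    thus ?thesis using m_exp_neg_two_log_term eps_pos by (intro add_left_mono mult_left_mono) auto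
  qed
  finally show ?thesis by (simp add: power2_eq_square power3_eq_cube)
qed

lemma sum_p_eq: "(\<Sum>j<m. p x j) = (\<Sum>i<n. x i * (1 + g x i)) + (\<Sum>j<m. p x j * (1 - matvec A n x j))"
  using sum_mult_matvec_swap[of "p x" x] unfolding one_plus_grad_f
  by (simp add: algebra_simps sum_subtractf)

lemma sum_mult_xi_trunc_grad:
  "(\<Sum>i<n. xi_trunc eps (g x i) * c i) = (\<Sum>t<w. \<Sum>i<n. step_dir t x i * c i)"
proof -
  have "(\<Sum>i<n. xi_trunc eps (g x i) * c i) = (\<Sum>i<n. \<Sum>t<w. step_dir t x i * c i)"
    by (intro sum.cong refl) (simp add: sum_step_dir flip: sum_distrib_right)
  thus ?thesis by (simp add: sum.swap[of _ "{..<n}"])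
qed

lemma sum_x_one_plus_grad_le:
  assumes x: "\<forall>i<n. 0 \<le> x i"
  shows "(\<Sum>i<n. x i * (1 + g x i))
           \<le> (1 + eps) * (\<Sum>i<n. x i)
             + (\<Sum>t<w. (\<Sum>i<n. step_dir t x i * x i) + (\<Sum>i<n. g x i * step_dir t x i * x i))"
proof -
  let ?\<xi> = "\<lambda>i. xi_trunc eps (g x i)"
  have "x i * (1 + g x i) \<le> x i + (?\<xi> i * x i + eps * x i + ?\<xi> i * (g x i * x i))" if "i < n" for i
    using mult_left_mono[OF xi_trunc_grad_props(4)[OF that, of x], of "x i"] x that
    by (simp add: algebra_simps)
  hence "(\<Sum>i<n. x i * (1 + g x i))
           \<le> (\<Sum>i<n. x i + (?\<xi> i * x i + eps * x i + ?\<xi> i * (g x i * x i)))"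
    by (intro sum_mono) auto
  also have "\<dots> = (1 + eps) * (\<Sum>i<n. x i)
      + (\<Sum>t<w. (\<Sum>i<n. step_dir t x i * x i) + (\<Sum>i<n. step_dir t x i * (g x i * x i)))"
    unfolding sum.distrib[of "\<lambda>t. \<Sum>i<n. _ t i"] sum_mult_xi_trunc_grad[symmetric]
    by (simp add: sum.distrib sum_distrib_left algebra_simps)
  finally show ?thesis by (simp add: mult_ac)
qed

lemma sum_p_le_potential_drop:
  assumes "invariant x"
  shows "(1 - eps/2) * (\<Sum>j<m. p x j)
           \<le> (1 + eps) * (1 + 9/10 * eps) * OPT + eps^3/2
             + (\<Sum>t<w. potential x - potential (alg_step A m n eps t x))"
proof -
  have x: "\<forall>i<n. 0 \<le> x i" and load: "\<forall>j<m. matvec A n x j \<le> 1 + 9/10 * eps"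
    using assms unfolding invariant_def by (auto simp: less_imp_le)
  have "(1 + eps) * (\<Sum>i<n. x i) \<le> (1 + eps) * ((1 + 9/10 * eps) * OPT)"
    using sum_le_scaled_packing_OPT[OF x _ load] eps_pos by (intro mult_left_mono) auto
  moreover have "(\<Sum>t<w. (\<Sum>i<n. step_dir t x i * x i) + (\<Sum>i<n. g x i * step_dir t x i * x i))
                   \<le> (\<Sum>t<w. potential x - potential (alg_step A m n eps t x))"
    using bucket_progress[OF assms] by (intro sum_mono) auto
  ultimately show ?thesis
    using sum_p_eq[of x] sum_x_one_plus_grad_le[OF x] sum_p_mult_slack_le[of x]
    by (simp add: algebra_simps)
qed

lemma potential_lower_bound:
  assumes "invariant x"
  shows "- (4 * (1 + \<alpha>) / (3 * \<alpha>) * ((1 + 9/10 * eps) * OPT)) \<le> potential x"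
proof -
  have x: "\<forall>i<n. 0 \<le> x i" and load: "\<forall>j<m. matvec A n x j \<le> 1 + 9/10 * eps"
    using assms unfolding invariant_def by (auto simp: less_imp_le)
  have "- ((1 + 9/10 * eps) * OPT) \<le> f_mu x"
    using neg_sum_le_f_mu[of x] sum_le_scaled_packing_OPT[OF x _ load] eps_pos by simp
  hence "4 * (1 + \<alpha>) / (3 * \<alpha>) * - ((1 + 9/10 * eps) * OPT) \<le> 4 * (1 + \<alpha>) / (3 * \<alpha>) * f_mu x"
    using alpha_pos by (intro mult_left_mono) auto
  moreover have "0 \<le> (1 / \<alpha>) * (\<Sum>i<n. x i)"
    using x alpha_pos by (intro mult_nonneg_nonneg sum_nonneg) auto
  ultimately show ?thesis unfolding potential_def by simp
qed

lemma potential_x_init_le: "potential x0 \<le> 1 / \<alpha>"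
proof -
  have "4 * (1 + \<alpha>) / (3 * \<alpha>) * f_mu x0 \<le> 0"
    using f_mu_x_init_nonpos alpha_pos by (intro mult_nonneg_nonpos) auto
  moreover have "(1 / \<alpha>) * (\<Sum>i<n. x0 i) \<le> 1 / \<alpha>"
    using sum_x_init_le alpha_pos by (simp add: divide_le_cancel)
  ultimately show ?thesis unfolding potential_def by simp
qed

lemma alg_iter_eq_iterate_choices: "alg_iter A m n eps ts k = iterate_choices (alg_step A m n eps) x0 ts k"
  by (induction k) auto

lemma expected_ybar_total_eq:
  "expected_ybar_total A m n eps T
     = (1 / real T) * (\<Sum>ts\<in>choice_seqs w T. \<Sum>k<T. \<Sum>j<m. p (iterate_choices (alg_step A m n eps) x0 ts k) j)
       / real w ^ T"
  unfolding expected_ybar_total_def ybar_total_def choice_seqs_def[symmetric] alg_iter_eq_iterate_choices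
  by (simp add: sum_distrib_left sum.swap[of _ "{..<m}"])

lemma sum_choice_seqs_sum_p_le:
  defines "K \<equiv> ((1 + eps) * (1 + 9/10 * eps) * OPT + eps^3/2) / (1 - eps/2)"
    and "c \<equiv> real w / (1 - eps/2)"
    and "B \<equiv> 4 * (1 + \<alpha>) / (3 * \<alpha>) * ((1 + 9/10 * eps) * OPT)"
  shows "(\<Sum>ts\<in>choice_seqs w T. \<Sum>k<T. \<Sum>j<m. p (iterate_choices (alg_step A m n eps) x0 ts k) j)
           \<le> real w ^ T * (real T * K + c * (potential x0 + B))"
proof -
  have c: "0 < c" unfolding c_def using wpar_props(1) eps_le by simp
  have "(\<Sum>ts\<in>choice_seqs w T. \<Sum>k<T. \<Sum>j<m. p (iterate_choices (alg_step A m n eps) x0 ts k) j)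
          \<le> real w ^ T * (real T * K + c * potential x0 - c * - B)"
  proof (rule sum_choice_seqs_iterate_le[where I = invariant and \<Phi> = "\<lambda>x. c * potential x"])
    show "0 < w" using wpar_props(1) by simp
    show "invariant (alg_step A m n eps t x)" if "invariant x" for x t
      using invariant_alg_step that .
    show "c * - B \<le> c * potential x" if "invariant x" for x
      using potential_lower_bound[OF that] c unfolding B_def by (intro mult_left_mono) auto
    show "(\<Sum>j<m. p x j) \<le> K + 1 / real w * (\<Sum>t<w. c * potential x - c * potential (alg_step A m n eps t x))"
      if "invariant x" for x
    proof -
      have "1 / real w * (\<Sum>t<w. c * potential x - c * potential (alg_step A m n eps t x))
              = (\<Sum>t<w. potential x - potential (alg_step A m n eps t x)) / (1 - eps/2)"
        unfolding right_diff_distrib[symmetric] sum_distrib_left[symmetric]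
        unfolding c_def using wpar_props(1) by simp
      moreover have "(\<Sum>j<m. p x j) \<le> ((1 + eps) * (1 + 9/10 * eps) * OPT + eps^3/2
                        + (\<Sum>t<w. potential x - potential (alg_step A m n eps t x))) / (1 - eps/2)"
        using sum_p_le_potential_drop[OF that] eps_le by (simp add: pos_le_divide_eq mult.commute)
      ultimately show ?thesis unfolding K_def by (simp add: add_divide_distrib)
    qed
  qed (rule invariant_x_init)
  thus ?thesis by (simp add: algebra_simps)
qed

theorem expected_ybar_total_le:
  assumes T: "6 * real w / (\<alpha> * eps) \<le> real T"
  shows "expected_ybar_total A m n eps T \<le> (1 + 5 * eps) * OPT"
proof -
  define K where "K = ((1 + eps) * (1 + 9/10 * eps) * OPT + eps^3/2) / (1 - eps/2)"
  define R where "R = 1 + (4 * (1 + \<alpha>) / 3) * (1 + 9/10 * eps) * OPT"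
  have al: "0 < \<alpha>" "\<alpha> \<le> 1/80" using alpha_pos alpha_le by auto
  have w: "1 \<le> w" using wpar_props(1) .
  have "0 < 6 * real w / (\<alpha> * eps)" using w al eps_pos by (intro divide_pos_pos mult_pos_pos) auto
  hence T_pos: "0 < real T" using T by linarith
  have R_pos: "0 \<le> R" unfolding R_def using one_le_packing_OPT eps_pos al by simp
  have "real w / (1 - eps/2) * (potential x0 + 4 * (1 + \<alpha>) / (3 * \<alpha>) * ((1 + 9/10 * eps) * OPT))
          \<le> real w / (1 - eps/2) * (R / \<alpha>)"
    using potential_x_init_le al w eps_le unfolding R_def by (intro mult_left_mono) (auto simp: field_simps)
  hence "(\<Sum>ts\<in>choice_seqs w T. \<Sum>k<T. \<Sum>j<m. p (iterate_choices (alg_step A m n eps) x0 ts k) j)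
          \<le> real w ^ T * (real T * K + real w / (1 - eps/2) * (R / \<alpha>))"
    using sum_choice_seqs_sum_p_le[of T] w unfolding K_def
    by (meson add_left_mono mult_left_mono order_trans zero_le_power of_nat_0_le_iff)
  hence "expected_ybar_total A m n eps T
           \<le> (1 / real T) * (real w ^ T * (real T * K + real w / (1 - eps/2) * (R / \<alpha>))) / real w ^ T"
    unfolding expected_ybar_total_eq using T_pos by (intro divide_right_mono mult_left_mono) auto
  also have "\<dots> = K + (real w / (\<alpha> * real T)) * (R / (1 - eps/2))"
    using T_pos w al eps_le by (simp add: field_simps)
  also have "\<dots> \<le> K + (eps / 6) * (R / (1 - eps/2))"
  proof -
    have "real w / (\<alpha> * real T) \<le> eps / 6"
      using T al eps_pos T_pos by (simp add: divide_le_eq field_simps)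
    thus ?thesis using R_pos eps_le by (intro add_left_mono mult_right_mono) auto
  qed
  also have "\<dots> \<le> (1 + 5 * eps) * OPT"
    using approximation_factor_arith[OF eps_pos eps_le al one_le_packing_OPT]
    unfolding K_def R_def by (simp add: mult_ac)
  finally show ?thesis .
qed

end

theorem lemma4p1:
  fixes A :: "nat \<Rightarrow> nat \<Rightarrow> real" and m n T :: nat and \<epsilon> :: real
  assumes "0 < m" and "0 < n"
    and "\<forall>j<m. \<forall>i<n. 0 \<le> A j i"
    and "\<forall>i<n. \<exists>j<m. A j i \<noteq> 0"
    and "Min (colnorm A m ` {..<n}) = 1"
    and "0 < \<epsilon>" and "\<epsilon> \<le> 1 / 2"
    and "real T \<ge> 6 * real (wpar \<epsilon>) / (alpha n m \<epsilon> * \<epsilon>)"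
  shows "expected_ybar_total A m n \<epsilon> T \<le> (1 + 5 * \<epsilon>) * packing_OPT A m n"
proof -
  \<comment> \<open>The no-zero-column hypothesis is implied by the normalisation and not needed.\<close>
  interpret packing_instance A m n \<epsilon>
    using assms(1-3,5-7) by unfold_locales auto
  show ?thesis using assms(8) by (rule expected_ybar_total_le)
qed

end
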